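(* Let $\epsilon>0$ and let $a_1,\dots,a_N\in(0,1)$ satisfy $\sum_{i=1}^Na_i=1$ and $a_{N-1}+a_N\ge\epsilon$. Then \[\sum_{j=1}^N\frac{a_j}{\sum_{i\ge j}a_i}\le\lceil\log_2(1/\epsilon)\rceil+2.\] *)

theory Defs
  imports "HOL-Analysis.Analysis"
begin

end

theory Submission
  imports Defs
begin

text \<open>Writing \<open>S j\<close> for the tail sum \<open>\<Sum>i\<ge>j. a i\<close>, each ratio \<open>a j / S j = 1 - S (j+1) / S j\<close>
  is at most \<open>ln (S j) - ln (S (j+1))\<close> because \<open>1 - t \<le> -ln t\<close>. The ratios for \<open>j < N - 1\<close>
  therefore telescope to at most \<open>ln (S 1) - ln (S (N - 1)) = -ln (a (N-1) + a N) \<le> log 2 (1/\<epsilon>)\<close>,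
  and the two remaining ratios are each at most \<open>1\<close>.\<close>

lemma divide_add_le_ln_diff:
  fixes x y :: real
  assumes "0 \<le> x" and "0 < y"
  shows "x / (x + y) \<le> ln (x + y) - ln y"
proof -
  have "x + y > 0" using assms by simp
  then have "ln (y / (x + y)) \<le> y / (x + y) - 1"
    using assms by (intro ln_le_minus_one) auto
  also have "\<dots> = - (x / (x + y))"
    using \<open>x + y > 0\<close> by (simp add: field_simps)
  finally show ?thesis
    using assms \<open>x + y > 0\<close> by (simp add: ln_div)
qed

lemma sum_tail_ratio_le_ln:
  fixes a :: "nat \<Rightarrow> real"
  assumes pos: "\<And>i. i \<in> {m..N} \<Longrightarrow> 0 < a i" and "m \<le> k" and "k \<le> N"
  shows "(\<Sum>j=m..<k. a j / (\<Sum>i=j..N. a i)) \<le> ln (\<Sum>i=m..N. a i) - ln (\<Sum>i=k..N. a i)"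
proof -
  define S where "S j = (\<Sum>i=j..N. a i)" for j
  have "a j / S j \<le> ln (S j) - ln (S (Suc j))" if "j \<in> {m..<k}" for j
  proof -
    have "S j = a j + S (Suc j)"
      using that \<open>k \<le> N\<close> by (simp add: S_def sum.atLeast_Suc_atMost)
    moreover have "S (Suc j) > 0"
      unfolding S_def using that \<open>k \<le> N\<close> by (intro sum_pos) (auto intro: pos)
    ultimately show ?thesis
      using pos[of j] that \<open>k \<le> N\<close> divide_add_le_ln_diff[of "a j" "S (Suc j)"] by simp
  qed
  then have "(\<Sum>j=m..<k. a j / S j) \<le> (\<Sum>j=m..<k. ln (S j) - ln (S (Suc j)))"
    by (rule sum_mono)
  also have "\<dots> = ln (S m) - ln (S k)"
    using sum_Suc_diff'[OF \<open>m \<le> k\<close>, of "\<lambda>j. - ln (S j)"] by simp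
  finally show ?thesis unfolding S_def .
qed

lemma tail_ratio_le_one:
  fixes a :: "nat \<Rightarrow> real"
  assumes "\<And>i. i \<in> {j..N} \<Longrightarrow> 0 < a i" and "j \<le> N"
  shows "a j / (\<Sum>i=j..N. a i) \<le> 1"
proof -
  have "a j \<le> (\<Sum>i=j..N. a i)"
    using assms by (intro member_le_sum) (auto intro: less_imp_le)
  moreover have "0 < a j" using assms by simp
  ultimately show ?thesis by (simp add: divide_le_eq_1)
qed

lemma ln_le_log2:
  fixes x :: real
  assumes "1 \<le> x"
  shows "ln x \<le> log 2 x"
proof -
  have "ln x * ln 2 \<le> ln x"
    using assms ln_2_less_1 by (simp add: mult_left_le)
  then show ?thesis
    unfolding log_def using ln_gt_zero[of 2] by (simp add: field_simps)
qed

theorem lemma6p11: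
  fixes a :: "nat \<Rightarrow> real" and N :: nat and \<epsilon> :: real
  assumes "\<epsilon> > 0"
    and "N \<ge> 2"
    and "\<And>i. i \<in> {1..N} \<Longrightarrow> 0 < a i \<and> a i < 1"
    and "(\<Sum>i=1..N. a i) = 1"
    and "a (N - 1) + a N \<ge> \<epsilon>"
  shows "(\<Sum>j=1..N. a j / (\<Sum>i=j..N. a i)) \<le> real_of_int \<lceil>log 2 (1 / \<epsilon>)\<rceil> + 2"
proof -
  define r where "r j = a j / (\<Sum>i=j..N. a i)" for j
  define T where "T = a (N - 1) + a N"
  obtain n where N: "N = Suc (Suc n)" using \<open>N \<ge> 2\<close> by (metis add_2_eq_Suc le_Suc_ex)
  have pos: "\<And>i. i \<in> {1..N} \<Longrightarrow> 0 < a i" using assms(3) by blast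
  have tail: "(\<Sum>i=N-1..N. a i) = T" by (simp add: T_def N)
  have "0 < T" and "\<epsilon> \<le> T" using assms(1,5) by (simp_all add: T_def)
  have "T \<le> 1"
    using sum_mono2[of "{1..N}" "{N-1..N}" a] pos assms(4) tail
    by (fastforce simp: N intro: less_imp_le)
  have "(\<Sum>j=1..<N-1. r j) \<le> ln 1 - ln T"
    unfolding r_def using sum_tail_ratio_le_ln[of 1 N a "N - 1"] pos tail assms(4) by (simp add: N)
  also have "\<dots> = ln (1 / T)"
    using \<open>0 < T\<close> by (simp add: ln_div)
  also have "\<dots> \<le> log 2 (1 / T)"
    using \<open>0 < T\<close> \<open>T \<le> 1\<close> by (intro ln_le_log2) simp
  also have "\<dots> \<le> log 2 (1 / \<epsilon>)"
    using \<open>0 < T\<close> \<open>\<epsilon> \<le> T\<close> assms(1) by (intro log_mono) (simp_all add: frac_le)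
  finally have "(\<Sum>j=1..<N-1. r j) \<le> \<lceil>log 2 (1 / \<epsilon>)\<rceil>" by linarith
  moreover have "r (N - 1) \<le> 1" and "r N \<le> 1"
    unfolding r_def using pos by (intro tail_ratio_le_one; simp add: N)+
  moreover have "(\<Sum>j=1..N. r j) = (\<Sum>j=1..<N-1. r j) + r (N - 1) + r N"
    by (simp add: N atLeastLessThanSuc_atLeastAtMost[symmetric] sum.atLeastLessThan_Suc)
  ultimately show ?thesis unfolding r_def by linarith
qed

end
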